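(* For every hypothesis class $\mathcal{H}$ and every integer $t\ge0$, $\mathcal{S}(\mathcal{H},t)\le\mathcal{N}(0,\mathcal{H},t)$.
   Context: Hypotheses are maps $\mathcal{X}\to\{-1,+1\}$. A depth-$t$ $Z$-valued tree $\mathbf{z}$ is a sequence of maps $\mathbf{z}_s:\{\pm1\}^{s-1}\to Z$, $s=1,\dots,t$; write $\mathbf{z}_s(\epsilon)=\mathbf{z}_s(\epsilon_1,\dots,\epsilon_{s-1})$ for $\epsilon\in\{\pm1\}^t$. For a depth-$t$ $\mathcal{X}$-valued tree $\mathbf{x}$, $S(\mathcal{H},\mathbf{x})=\{\epsilon\in\{\pm1\}^t:\exists h\in\mathcal{H},\ \epsilon_s=h(\mathbf{x}_s(\epsilon))\ \forall s\le t\}$; the tree shattering coefficient is $\mathcal{S}(\mathcal{H},t)=\max_{\mathbf{x}}|S(\mathcal{H},\mathbf{x})|$ for $t\ge1$, and $\mathcal{S}(\mathcal{H},0)=1$ if $\mathcal{H}\neq\emptyset$, $0$ otherwise. A set $V$ of depth-$t$ $\{\pm1\}$-valued trees is a sequential zero cover of $\mathcal{H}$ on $\mathbf{x}$ if for all $h\in\mathcal{H}$ and all $\epsilon\in\{\pm1\}^t$ there is $\mathbf{v}\in V$ with $\mathbf{v}_s(\epsilon)=h(\mathbf{x}_s(\epsilon))$ for $s=1,\dots,t$. $\mathcal{N}(0,\mathcal{H},\mathbf{x})$ is the minimum size of such a cover, and $\mathcal{N}(0,\mathcal{H},t)=\max_{\mathbf{x}}\mathcal{N}(0,\mathcal{H},\mathbf{x})$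 over depth-$t$ $\mathcal{X}$-valued trees. *)

theory Defs
  imports Main
begin

text \<open>A depth-t Z-valued tree is a function z :: nat \<Rightarrow> int list \<Rightarrow> Z, where
  (0-indexed) level s < t is the map z s applied to the length-s prefix
  of the sign sequence; i.e. z_{s+1}(eps) = z s (take s eps).\<close>

definition sign_seqs :: "nat \<Rightarrow> int list set" where
  "sign_seqs t = {e. length e = t \<and> set e \<subseteq> {-1, 1}}"

definition shatter_set ::
  "('a \<Rightarrow> int) set \<Rightarrow> (nat \<Rightarrow> int list \<Rightarrow> 'a) \<Rightarrow> nat \<Rightarrow> int list set" where
  "shatter_set H x t =
     {e \<in> sign_seqs t. \<exists>h\<in>H. \<forall>s<t. e ! s = h (x s (take s e))}"

definition tree_shattering_coeff :: "('a \<Rightarrow> int) set \<Rightarrow> nat \<Rightarrow> nat" where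
  "tree_shattering_coeff H t =
     (if t = 0 then (if H = {} then 0 else 1)
      else Sup {card (shatter_set H x t) | x. True})"

definition is_seq_zero_cover ::
  "('a \<Rightarrow> int) set \<Rightarrow> (nat \<Rightarrow> int list \<Rightarrow> 'a) \<Rightarrow> nat
    \<Rightarrow> (nat \<Rightarrow> int list \<Rightarrow> int) set \<Rightarrow> bool" where
  "is_seq_zero_cover H x t V \<longleftrightarrow>
     (\<forall>v\<in>V. \<forall>e\<in>sign_seqs t. \<forall>s<t. v s (take s e) \<in> {-1, 1}) \<and>
     (\<forall>h\<in>H. \<forall>e\<in>sign_seqs t. \<exists>v\<in>V. \<forall>s<t. v s (take s e) = h (x s (take s e)))"

definition zero_cover_num_tree ::
  "('a \<Rightarrow> int) set \<Rightarrow> (nat \<Rightarrow> int list \<Rightarrow> 'a) \<Rightarrow> nat \<Rightarrow> nat" where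
  "zero_cover_num_tree H x t =
     (LEAST n. \<exists>V. finite V \<and> card V = n \<and> is_seq_zero_cover H x t V)"

definition zero_cover_num :: "('a \<Rightarrow> int) set \<Rightarrow> nat \<Rightarrow> nat" where
  "zero_cover_num H t = Sup {zero_cover_num_tree H x t | x. True}"

end

theory Submission
  imports Defs
begin

text \<open>A zero cover of the tree x contains, for every shattered sign sequence e, a tree that
  reproduces e along the path e itself. Two distinct sign sequences first differ at some level,
  where they share the prefix and hence the label of such a tree, so no tree serves both: the
  cover is at least as large as the shattered set. Since the cover number is a LEAST and the
  cover coefficient a Sup over nat, one also needs that covers exist and have bounded size;
  the finite set of all sign-valued trees, normalised to 1 off the reachable nodes, is one.\<close>

lemma finite_sign_seqs: "finite (sign_seqs t)"
  using finite_lists_length_eq[of "{-1, 1::int}" t]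
  unfolding sign_seqs_def by (simp add: conj_commute)

lemma take_mem_sign_seqs: "e \<in> sign_seqs t \<Longrightarrow> s \<le> t \<Longrightarrow> take s e \<in> sign_seqs s"
  unfolding sign_seqs_def by (auto dest: in_set_takeD)

lemma shatter_set_0: "H \<noteq> {} \<Longrightarrow> shatter_set H x 0 = {[]}"
  unfolding shatter_set_def sign_seqs_def by auto

lemma eq_if_tree_follows_both:
  assumes "length e = t" "length e' = t"
    and "\<forall>s<t. v s (take s e) = e ! s" "\<forall>s<t. v s (take s e') = e' ! s"
  shows "e = e'"
proof -
  have "take s e = take s e'" if "s \<le> t" for s
    using that
  proof (induction s)
    case (Suc s)
    then have "s < t" "take s e = take s e'"
      by simp_all
    then have "e ! s = e' ! s"
      using assms(3,4) by metis
    with Suc.IH \<open>s < t\<close> show ?case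
      using assms(1,2) by (simp add: take_Suc_conv_app_nth)
  qed simp
  from this[of t] show ?thesis
    using assms(1,2) by simp
qed

lemma card_shatter_set_le_card_cover:
  assumes "finite V" and cover: "is_seq_zero_cover H x t V"
  shows "card (shatter_set H x t) \<le> card V"
proof -
  have "\<exists>v\<in>V. \<forall>s<t. v s (take s e) = e ! s" if shattered: "e \<in> shatter_set H x t" for e
  proof -
    obtain h where "h \<in> H" "e \<in> sign_seqs t" and e: "\<forall>s<t. e ! s = h (x s (take s e))"
      using shattered unfolding shatter_set_def by blast
    with cover obtain v where "v \<in> V" "\<forall>s<t. v s (take s e) = h (x s (take s e))"
      unfolding is_seq_zero_cover_def by blast
    with e show ?thesis by auto
  qed
  then obtain f where f: "\<And>e. e \<in> shatter_set H x t \<Longrightarrow>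
      f e \<in> V \<and> (\<forall>s<t. f e s (take s e) = e ! s)"
    by metis
  have "inj_on f (shatter_set H x t)"
  proof (rule inj_onI)
    fix e e' assume e: "e \<in> shatter_set H x t" and e': "e' \<in> shatter_set H x t"
      and "f e = f e'"
    then show "e = e'"
      using f[OF e] f[OF e'] eq_if_tree_follows_both[of e t e' "f e"]
      unfolding shatter_set_def sign_seqs_def by auto
  qed
  moreover have "f ` shatter_set H x t \<subseteq> V"
    using f by auto
  ultimately show ?thesis
    using card_inj_on_le \<open>finite V\<close> by blast
qed

definition sign_trees :: "nat \<Rightarrow> (nat \<Rightarrow> int list \<Rightarrow> int) set" where
  "sign_trees t = {v. \<forall>s l. (s < t \<and> l \<in> sign_seqs s \<longrightarrow> v s l \<in> {-1, 1}) \<and>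
                             (\<not> (s < t \<and> l \<in> sign_seqs s) \<longrightarrow> v s l = 1)}"

lemma finite_sign_trees: "finite (sign_trees t)"
proof -
  define D where "D = (SIGMA s:{..<t}. sign_seqs s)"
  define G where "G = {g. \<forall>p. (p \<in> D \<longrightarrow> g p \<in> {-1, 1::int}) \<and> (p \<notin> D \<longrightarrow> g p = 1)}"
  have "finite D"
    unfolding D_def using finite_sign_seqs by blast
  then have "finite G"
    unfolding G_def by (rule finite_set_of_finite_funs) simp
  moreover have "sign_trees t \<subseteq> curry ` G"
  proof
    fix v assume "v \<in> sign_trees t"
    then have "case_prod v \<in> G"
      unfolding sign_trees_def G_def D_def by auto
    then show "v \<in> curry ` G"
      by (metis curry_case_prod image_eqI)
  qed
  ultimately show ?thesis
    using finite_subset by blast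
qed

lemma is_seq_zero_cover_sign_trees:
  assumes "\<forall>h\<in>H. \<forall>z. h z \<in> {-1, 1}"
  shows "is_seq_zero_cover H x t (sign_trees t)"
  unfolding is_seq_zero_cover_def
proof (intro conjI ballI allI impI)
  fix v e s assume "v \<in> sign_trees t" "e \<in> sign_seqs t" "s < t"
  then show "v s (take s e) \<in> {-1, 1}"
    using take_mem_sign_seqs unfolding sign_trees_def by auto
next
  fix h e assume "h \<in> H" and e: "e \<in> sign_seqs t"
  define v where "v s l = (if s < t \<and> l \<in> sign_seqs s then h (x s l) else 1)" for s l
  have "v \<in> sign_trees t"
    using assms \<open>h \<in> H\<close> unfolding v_def sign_trees_def by auto
  moreover have "\<forall>s<t. v s (take s e) = h (x s (take s e))"
    using take_mem_sign_seqs[OF e] unfolding v_def by simp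
  ultimately show "\<exists>v\<in>sign_trees t. \<forall>s<t. v s (take s e) = h (x s (take s e))"
    by blast
qed

lemma zero_cover_num_tree_le_card:
  "finite V \<Longrightarrow> is_seq_zero_cover H x t V \<Longrightarrow> zero_cover_num_tree H x t \<le> card V"
  unfolding zero_cover_num_tree_def by (rule Least_le) blast

lemma minimal_seq_zero_cover_exists:
  assumes "\<forall>h\<in>H. \<forall>z. h z \<in> {-1, 1}"
  obtains V where "finite V" "card V = zero_cover_num_tree H x t" "is_seq_zero_cover H x t V"
proof -
  have "\<exists>n V. finite V \<and> card V = n \<and> is_seq_zero_cover H x t V"
    using finite_sign_trees is_seq_zero_cover_sign_trees[OF assms] by blast
  from LeastI_ex[OF this] show ?thesis
    using that unfolding zero_cover_num_tree_def by blast
qed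

lemma card_shatter_set_le_zero_cover_num_tree:
  assumes "\<forall>h\<in>H. \<forall>z. h z \<in> {-1, 1}"
  shows "card (shatter_set H x t) \<le> zero_cover_num_tree H x t"
  using minimal_seq_zero_cover_exists[OF assms] card_shatter_set_le_card_cover by metis

lemma zero_cover_num_tree_le_zero_cover_num:
  assumes "\<forall>h\<in>H. \<forall>z. h z \<in> {-1, 1}"
  shows "zero_cover_num_tree H x t \<le> zero_cover_num H t"
proof -
  have "bdd_above {zero_cover_num_tree H x t | x. True}"
    using zero_cover_num_tree_le_card[OF finite_sign_trees is_seq_zero_cover_sign_trees[OF assms]]
    by (intro bdd_aboveI[where M = "card (sign_trees t)"]) blast
  then show ?thesis
    unfolding zero_cover_num_def by (rule cSup_upper[rotated]) blast
qed

theorem mainTheorem13: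
  fixes H :: "('a \<Rightarrow> int) set" and t :: nat
  assumes "\<forall>h\<in>H. \<forall>z. h z \<in> {-1, 1}"
  shows "tree_shattering_coeff H t \<le> zero_cover_num H t"
proof -
  have shatter_le: "card (shatter_set H x t) \<le> zero_cover_num H t" for x
    using card_shatter_set_le_zero_cover_num_tree[OF assms]
      zero_cover_num_tree_le_zero_cover_num[OF assms] le_trans by blast
  show ?thesis
  proof (cases "t = 0 \<and> H \<noteq> {}")
    case True
    then have "card (shatter_set H undefined t) = 1"
      by (simp add: shatter_set_0)
    with True show ?thesis
      using shatter_le[of undefined] unfolding tree_shattering_coeff_def by simp
  next
    case False
    then show ?thesis
      unfolding tree_shattering_coeff_def using shatter_le by (auto intro!: cSup_least)
  qed
qed

end
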